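(* Let $\kappa\in\mathbb C$ with $\Re\kappa>0,\Im\kappa>0$, and let $R^\kappa_{12},R^\kappa_{21}$ be the entries of $\mathcal R_\kappa$ (context). There exists $c_1>0$ such that for all $\bm\varphi\in\bm H^{-1/2}$ and $\bm g\in\bm H^{1/2}$: $$-\Re\langle R^\kappa_{12}\bm\varphi,\overline{\bm\varphi}\rangle\ge c_1\|\bm\varphi\|^2_{\bm H^{-1/2}},\quad -\Re\langle R^\kappa_{21}\bm g,\overline{\bm g}\rangle\ge c_1\|\bm g\|^2_{\bm H^{1/2}},$$ $$-\Im\langle R^\kappa_{12}\bm\varphi,\overline{\bm\varphi}\rangle\ge c_1\|\bm\varphi\|^2_{\bm H^{-3/2}},\quad \Im\langle R^\kappa_{21}\bm g,\overline{\bm g}\rangle\ge c_1\|\bm g\|^2_{\bm H^{-1/2}}.$$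
   Context: For $s\in\mathbb R$, $H^s$ is the space of $2\pi$-periodic distributions $\varphi=\sum_{n\in\mathbb Z}\hat\varphi(n)e^{int}$ with $\|\varphi\|_s^2:=|\hat\varphi(0)|^2+\sum_{n\ne0}|n|^{2s}|\hat\varphi(n)|^2<\infty$; $\bm H^s=H^s\times H^s$. $\langle\bm g,\bm\varphi\rangle=\int_0^{2\pi}\bm g\cdot\bm\varphi\,dt$ (bilinear, extended by duality), overline = conjugation. Multipliers: $\mathrm H$ has symbol $1$ for $n\ge0$, $-1$ for $n<0$; $\Lambda_\kappa$ has symbol $(n^2-\kappa^2)^{-1/2}$ (principal branch), $\Lambda_\kappa^{-1}$ its inverse; $\bm\Lambda_\kappa=\mathrm{diag}(\Lambda_\kappa,\Lambda_\kappa)$, $\bm\Lambda_\kappa^{-1}=\mathrm{diag}(\Lambda_\kappa^{-1},\Lambda_\kappa^{-1})$, $\bm H(g_1,g_2)=(-\mathrm Hg_2,\mathrm Hg_1)$, $\bm I$ identity. Two materials with Lamé parameters $\mu_\pm>0$, $\lambda_\pm>-\mu_\pm$; $\alpha_\pm:=\frac{i\mu_\pm}{2(\lambda_\pm+2\mu_\pm)}$, $\beta_\pm:=\frac{\lambda_\pm+3\mu_\pm}{4\mu_\pm(\lambda_\pm+2\mu_\pm)}$, $\delta_\pm:=-\frac{\mu_\pm(\lambda_\pm+\mu_\pm)}{\lambda_\pm+2\mu_\pm}$, $\rho:=-(\beta_++\beta_-)(\delta_++\delta_-)-(\alpha_++\alpha_-)^2$. $\mathcal C^\kappa_\pm:=\begin{bmatrix}\alpha_\pm\bm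 H&-\beta_\pm\bm\Lambda_\kappa\\\delta_\pm\bm\Lambda_\kappa^{-1}&-\alpha_\pm\bm H\end{bmatrix}$ and $\mathcal R_\kappa:=\rho^{-1}(\mathcal C^\kappa_++\mathcal C^\kappa_-)(\frac12\mathcal I+\mathcal C^\kappa_-)=\begin{bmatrix}R^\kappa_{11}&R^\kappa_{12}\\R^\kappa_{21}&R^\kappa_{22}\end{bmatrix}$; explicitly $R^\kappa_{12}=-\frac{\beta_++\beta_-}{\rho}\bm\Lambda_\kappa\big(\frac12\bm I+\frac{\alpha_+\beta_--\alpha_-\beta_+}{\beta_++\beta_-}\bm H\big)$ and $R^\kappa_{21}=\frac{\delta_++\delta_-}{\rho}\bm\Lambda_\kappa^{-1}\big(\frac12\bm I-\frac{\alpha_+\delta_--\alpha_-\delta_+}{\delta_++\delta_-}\bm H\big)$. *)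

theory Defs
  imports "HOL-Analysis.Analysis"
begin

text \<open>A 2pi-periodic distribution is represented by its Fourier coefficient
sequence; a vector field in (H^s)^2 by a pair of such sequences; an element of
(H^s)^2 x (H^s)^2 (the space on which the block operators act) by a pair of pairs.\<close>

type_synonym sq = "int \<Rightarrow> complex"
type_synonym vf = "sq \<times> sq"
type_synonym blk = "vf \<times> vf"

definition sob_weight :: "real \<Rightarrow> sq \<Rightarrow> int \<Rightarrow> real" where
  "sob_weight s f n = (if n = 0 then (cmod (f 0))\<^sup>2 else \<bar>real_of_int n\<bar> powr (2 * s) * (cmod (f n))\<^sup>2)"

definition inH :: "real \<Rightarrow> sq \<Rightarrow> bool" where
  "inH s f \<longleftrightarrow> sob_weight s f summable_on UNIV"

definition sob_norm2 :: "real \<Rightarrow> sq \<Rightarrow> real" where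
  "sob_norm2 s f = (\<Sum>\<^sub>\<infinity>n\<in>UNIV. sob_weight s f n)"

definition inHv :: "real \<Rightarrow> vf \<Rightarrow> bool" where
  "inHv s g \<longleftrightarrow> inH s (fst g) \<and> inH s (snd g)"

definition sob_vnorm2 :: "real \<Rightarrow> vf \<Rightarrow> real" where
  "sob_vnorm2 s g = sob_norm2 s (fst g) + sob_norm2 s (snd g)"

text \<open>\<open>\<langle>g,\<phi>\<rangle> = \<integral>_0^{2\<pi>} g\<cdot>\<phi> dt = 2\<pi> \<Sum>_n (\<hat>g_1(n)\<hat>\<phi>_1(-n) + \<hat>g_2(n)\<hat>\<phi>_2(-n))\<close>,
extended by duality.\<close>

definition pairing :: "vf \<Rightarrow> vf \<Rightarrow> complex" where
  "pairing g \<phi> = 2 * of_real pi *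
     (\<Sum>\<^sub>\<infinity>n\<in>UNIV. fst g n * fst \<phi> (-n) + snd g n * snd \<phi> (-n))"

text \<open>Complex conjugate of a distribution: its n-th coefficient is the conjugate of the (-n)-th.\<close>

definition vconj :: "vf \<Rightarrow> vf" where
  "vconj g = (\<lambda>n. cnj (fst g (-n)), \<lambda>n. cnj (snd g (-n)))"

definition Hs :: "sq \<Rightarrow> sq" where
  "Hs f = (\<lambda>n. (if n \<ge> 0 then 1 else -1) * f n)"

definition lam_sym :: "complex \<Rightarrow> int \<Rightarrow> complex" where
  "lam_sym \<kappa> n = ((of_int n)\<^sup>2 - \<kappa>\<^sup>2) powr (-1/2)"

definition Lam :: "complex \<Rightarrow> sq \<Rightarrow> sq" where
  "Lam \<kappa> f = (\<lambda>n. lam_sym \<kappa> n * f n)"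

definition LamInv :: "complex \<Rightarrow> sq \<Rightarrow> sq" where
  "LamInv \<kappa> f = (\<lambda>n. inverse (lam_sym \<kappa> n) * f n)"

definition vadd :: "vf \<Rightarrow> vf \<Rightarrow> vf" where
  "vadd v w = (\<lambda>n. fst v n + fst w n, \<lambda>n. snd v n + snd w n)"

definition vsmul :: "complex \<Rightarrow> vf \<Rightarrow> vf" where
  "vsmul c v = (\<lambda>n. c * fst v n, \<lambda>n. c * snd v n)"

definition vzero :: vf where
  "vzero = (\<lambda>n. 0, \<lambda>n. 0)"

definition vH :: "vf \<Rightarrow> vf" where
  "vH g = (\<lambda>n. - Hs (snd g) n, Hs (fst g))"

definition vLam :: "complex \<Rightarrow> vf \<Rightarrow> vf" where
  "vLam \<kappa> g = (Lam \<kappa> (fst g), Lam \<kappa> (snd g))"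

definition vLamInv :: "complex \<Rightarrow> vf \<Rightarrow> vf" where
  "vLamInv \<kappa> g = (LamInv \<kappa> (fst g), LamInv \<kappa> (snd g))"

definition badd :: "blk \<Rightarrow> blk \<Rightarrow> blk" where
  "badd X Y = (vadd (fst X) (fst Y), vadd (snd X) (snd Y))"

definition bsmul :: "complex \<Rightarrow> blk \<Rightarrow> blk" where
  "bsmul c X = (vsmul c (fst X), vsmul c (snd X))"

definition alpha :: "real \<Rightarrow> real \<Rightarrow> complex" where
  "alpha \<mu> la = \<i> * of_real \<mu> / (2 * of_real (la + 2 * \<mu>))"

definition beta :: "real \<Rightarrow> real \<Rightarrow> complex" where
  "beta \<mu> la = of_real ((la + 3 * \<mu>) / (4 * \<mu> * (la + 2 * \<mu>)))"

definition delta :: "real \<Rightarrow> real \<Rightarrow> complex" where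
  "delta \<mu> la = of_real (- (\<mu> * (la + \<mu>)) / (la + 2 * \<mu>))"

definition rho :: "real \<Rightarrow> real \<Rightarrow> real \<Rightarrow> real \<Rightarrow> complex" where
  "rho \<mu>p lp \<mu>m lm =
     - (beta \<mu>p lp + beta \<mu>m lm) * (delta \<mu>p lp + delta \<mu>m lm)
     - (alpha \<mu>p lp + alpha \<mu>m lm)\<^sup>2"

definition Cop :: "real \<Rightarrow> real \<Rightarrow> complex \<Rightarrow> blk \<Rightarrow> blk" where
  "Cop \<mu> la \<kappa> X =
     (vadd (vsmul (alpha \<mu> la) (vH (fst X))) (vsmul (- beta \<mu> la) (vLam \<kappa> (snd X))),
      vadd (vsmul (delta \<mu> la) (vLamInv \<kappa> (fst X))) (vsmul (- alpha \<mu> la) (vH (snd X))))"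

definition Rop :: "real \<Rightarrow> real \<Rightarrow> real \<Rightarrow> real \<Rightarrow> complex \<Rightarrow> blk \<Rightarrow> blk" where
  "Rop \<mu>p lp \<mu>m lm \<kappa> X =
     (let Y = badd (bsmul (1/2) X) (Cop \<mu>m lm \<kappa> X)
      in bsmul (inverse (rho \<mu>p lp \<mu>m lm)) (badd (Cop \<mu>p lp \<kappa> Y) (Cop \<mu>m lm \<kappa> Y)))"

definition R12 :: "real \<Rightarrow> real \<Rightarrow> real \<Rightarrow> real \<Rightarrow> complex \<Rightarrow> vf \<Rightarrow> vf" where
  "R12 \<mu>p lp \<mu>m lm \<kappa> \<phi> = fst (Rop \<mu>p lp \<mu>m lm \<kappa> (vzero, \<phi>))"

definition R21 :: "real \<Rightarrow> real \<Rightarrow> real \<Rightarrow> real \<Rightarrow> complex \<Rightarrow> vf \<Rightarrow> vf" where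
  "R21 \<mu>p lp \<mu>m lm \<kappa> g = snd (Rop \<mu>p lp \<mu>m lm \<kappa> (g, vzero))"

end

theory Submission
  imports Defs
begin

(* Everything is diagonal in Fourier variables. On the n-th mode, R12 acts as lambda_n and R21 as
   1/lambda_n, where lambda_n = (n^2 - kappa^2)^(-1/2), composed with rho^-1 (a I + b H) for a real a
   and a purely imaginary b (alpha is imaginary; beta, delta, rho are real). So the n-th term of
   <R phi, conj phi> is lambda_n^(+-1) times the real number a |phi(n)|^2 + g X_n with
   |X_n| <= |phi(n)|^2, and 0 < Im alpha < 1/2, beta > 0, delta < 0 force a + |g| < 0.
   What remains are bounds on w = csqrt (n^2 - kappa^2): it lies in the open fourth quadrant with
   Re w and |w| comparable to <n>, and -Im w = Im kappa^2 / (2 Re w) comparable to 1/<n>. Hence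
   Re lambda_n, Im lambda_n, Re w, -Im w are bounded below by multiples of <n>^-1, <n>^-3, <n>,
   <n>^-1, which are exactly the weights of the Sobolev norms in the claim. *)

section \<open>Sobolev norms in terms of Fourier modes\<close>

definition freq_weight :: "int \<Rightarrow> real" where
  "freq_weight n = (if n = 0 then 1 else \<bar>real_of_int n\<bar>)"

lemma freq_weight_ge_1: "1 \<le> freq_weight n"
  by (auto simp: freq_weight_def simp flip: of_int_abs)

lemma freq_weight_sq: "(freq_weight n)\<^sup>2 = max 1 ((real_of_int n)\<^sup>2)"
proof (cases "n = 0")
  case False
  then have "1 \<le> n\<^sup>2"
    by (simp add: int_one_le_iff_zero_less)
  then have "1 \<le> (real_of_int n)\<^sup>2"
    by (metis of_int_1_le_iff of_int_power)
  with False show ?thesis by (simp add: freq_weight_def)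
qed (simp add: freq_weight_def)

lemma freq_weight_powr:
  "freq_weight n powr (2 * (1/2)) = freq_weight n"
  "freq_weight n powr (2 * (-1/2)) = 1 / freq_weight n"
  "freq_weight n powr (2 * (-3/2)) = 1 / freq_weight n ^ 3"
proof -
  have pos: "0 < freq_weight n" using freq_weight_ge_1[of n] by linarith
  show "freq_weight n powr (2 * (1/2)) = freq_weight n"
    using pos by simp
  show "freq_weight n powr (2 * (-1/2)) = 1 / freq_weight n"
    using pos by (simp add: powr_minus_divide)
  have "freq_weight n powr (2 * (-3/2)) = freq_weight n powr (- real 3)" by simp
  then show "freq_weight n powr (2 * (-3/2)) = 1 / freq_weight n ^ 3"
    using pos by (simp only: powr_minus_divide powr_realpow)
qed

lemma sob_weight_eq: "sob_weight s f n = freq_weight n powr (2 * s) * (cmod (f n))\<^sup>2"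
  by (simp add: sob_weight_def freq_weight_def)

lemma inH_mono:
  assumes "s \<le> t" and "inH t f"
  shows "inH s f"
  unfolding inH_def
proof (rule summable_on_comparison_test)
  show "sob_weight t f summable_on UNIV" using assms(2) unfolding inH_def .
  fix n
  have "freq_weight n powr (2 * s) \<le> freq_weight n powr (2 * t)"
    using assms(1) freq_weight_ge_1[of n] by (intro powr_mono) auto
  then show "sob_weight s f n \<le> sob_weight t f n"
    unfolding sob_weight_eq by (simp add: mult_right_mono)
  show "0 \<le> sob_weight s f n"
    unfolding sob_weight_eq by simp
qed

lemma inHv_mono: "s \<le> t \<Longrightarrow> inHv t \<phi> \<Longrightarrow> inHv s \<phi>"
  unfolding inHv_def using inH_mono by blast

definition mode_energy :: "vf \<Rightarrow> int \<Rightarrow> real" where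
  "mode_energy \<phi> n = (cmod (fst \<phi> n))\<^sup>2 + (cmod (snd \<phi> n))\<^sup>2"

lemma mode_energy_nonneg: "0 \<le> mode_energy \<phi> n"
  by (simp add: mode_energy_def)

lemma sob_vnorm2_eq:
  assumes "inHv s \<phi>"
  shows "(\<lambda>n. freq_weight n powr (2 * s) * mode_energy \<phi> n) summable_on UNIV"
    and "sob_vnorm2 s \<phi> = (\<Sum>\<^sub>\<infinity>n. freq_weight n powr (2 * s) * mode_energy \<phi> n)"
proof -
  have 1: "sob_weight s (fst \<phi>) summable_on UNIV" and 2: "sob_weight s (snd \<phi>) summable_on UNIV"
    using assms unfolding inHv_def inH_def by auto
  have eq: "freq_weight n powr (2 * s) * mode_energy \<phi> n = sob_weight s (fst \<phi>) n + sob_weight s (snd \<phi>) n" for n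
    unfolding sob_weight_eq mode_energy_def by (simp add: algebra_simps)
  show "(\<lambda>n. freq_weight n powr (2 * s) * mode_energy \<phi> n) summable_on UNIV"
    unfolding eq using summable_on_add[OF 1 2] .
  show "sob_vnorm2 s \<phi> = (\<Sum>\<^sub>\<infinity>n. freq_weight n powr (2 * s) * mode_energy \<phi> n)"
    unfolding eq sob_vnorm2_def sob_norm2_def using infsum_add[OF 1 2] by simp
qed

lemma sob_vnorm2_nonneg: "0 \<le> sob_vnorm2 s \<phi>"
  unfolding sob_vnorm2_def sob_norm2_def sob_weight_eq by (intro add_nonneg_nonneg infsum_nonneg) auto

lemma sob_vnorm2_scale_mono:
  "c' \<le> c \<Longrightarrow> c * sob_vnorm2 s \<phi> \<le> x \<Longrightarrow> c' * sob_vnorm2 s \<phi> \<le> x"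
  using mult_right_mono[OF _ sob_vnorm2_nonneg, of c' c s \<phi>] by linarith

section \<open>Quadratic forms of Fourier multipliers\<close>

definition mode_pair :: "vf \<Rightarrow> vf \<Rightarrow> int \<Rightarrow> complex" where
  "mode_pair \<psi> \<phi> n = fst \<psi> n * cnj (fst \<phi> n) + snd \<psi> n * cnj (snd \<phi> n)"

lemma pairing_vconj: "pairing \<psi> (vconj \<phi>) = 2 * of_real pi * (\<Sum>\<^sub>\<infinity>n. mode_pair \<psi> \<phi> n)"
  by (simp add: pairing_def vconj_def mode_pair_def)

definition hilbert_cross :: "vf \<Rightarrow> int \<Rightarrow> real" where
  "hilbert_cross \<phi> n = 2 * (if 0 \<le> n then 1 else -1) * Im (fst \<phi> n * cnj (snd \<phi> n))"

lemma mode_pair_vadd: "mode_pair (vadd \<psi> \<eta>) \<phi> n = mode_pair \<psi> \<phi> n + mode_pair \<eta> \<phi> n"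
  by (simp add: mode_pair_def vadd_def algebra_simps)

lemma mode_pair_vsmul: "mode_pair (vsmul a \<psi>) \<phi> n = a * mode_pair \<psi> \<phi> n"
  by (simp add: mode_pair_def vsmul_def algebra_simps)

lemma mode_pair_vLam: "mode_pair (vLam \<kappa> \<psi>) \<phi> n = lam_sym \<kappa> n * mode_pair \<psi> \<phi> n"
  by (simp add: mode_pair_def vLam_def Lam_def algebra_simps)

lemma mode_pair_vLamInv: "mode_pair (vLamInv \<kappa> \<psi>) \<phi> n = inverse (lam_sym \<kappa> n) * mode_pair \<psi> \<phi> n"
  by (simp add: mode_pair_def vLamInv_def LamInv_def algebra_simps)

lemma mode_pair_self: "mode_pair \<phi> \<phi> n = of_real (mode_energy \<phi> n)"
  by (simp only: mode_pair_def mode_energy_def of_real_add complex_norm_square)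

lemma mode_pair_vH: "mode_pair (vH \<phi>) \<phi> n = \<i> * of_real (hilbert_cross \<phi> n)"
  by (simp add: mode_pair_def hilbert_cross_def vH_def Hs_def complex_eq_iff algebra_simps)

lemma abs_hilbert_cross_le: "\<bar>hilbert_cross \<phi> n\<bar> \<le> mode_energy \<phi> n"
proof -
  have "2 * \<bar>Im (u * cnj v)\<bar> \<le> (cmod u)\<^sup>2 + (cmod v)\<^sup>2" for u v :: complex
  proof -
    have "2 * \<bar>Im (u * cnj v)\<bar> \<le> 2 * (cmod u * cmod v)"
      using abs_Im_le_cmod[of "u * cnj v"] by (simp add: norm_mult)
    also have "\<dots> \<le> (cmod u)\<^sup>2 + (cmod v)\<^sup>2"
      using sum_squares_bound[of "cmod u" "cmod v"] by simp
    finally show ?thesis .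
  qed
  moreover have "\<bar>hilbert_cross \<phi> n\<bar> = 2 * \<bar>Im (fst \<phi> n * cnj (snd \<phi> n))\<bar>"
    unfolding hilbert_cross_def by (simp add: abs_mult)
  ultimately show ?thesis
    unfolding mode_energy_def by (metis (no_types))
qed

lemma hilbert_form_bounds:
  "a * mode_energy \<phi> n + g * hilbert_cross \<phi> n \<le> (a + \<bar>g\<bar>) * mode_energy \<phi> n"
  "\<bar>a * mode_energy \<phi> n + g * hilbert_cross \<phi> n\<bar> \<le> (\<bar>a\<bar> + \<bar>g\<bar>) * mode_energy \<phi> n"
proof -
  have "\<bar>g * hilbert_cross \<phi> n\<bar> \<le> \<bar>g\<bar> * mode_energy \<phi> n"
    unfolding abs_mult by (intro mult_left_mono abs_hilbert_cross_le) auto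
  moreover have "\<bar>a * mode_energy \<phi> n\<bar> = \<bar>a\<bar> * mode_energy \<phi> n"
    using mode_energy_nonneg[of \<phi> n] by (simp add: abs_mult)
  ultimately show
    "a * mode_energy \<phi> n + g * hilbert_cross \<phi> n \<le> (a + \<bar>g\<bar>) * mode_energy \<phi> n"
    "\<bar>a * mode_energy \<phi> n + g * hilbert_cross \<phi> n\<bar> \<le> (\<bar>a\<bar> + \<bar>g\<bar>) * mode_energy \<phi> n"
    by (simp_all add: distrib_right abs_le_iff) linarith+
qed

lemma mode_pair_bounds:
  fixes \<sigma> z :: complex
  assumes mode: "mode_pair \<psi> \<phi> n = \<sigma> * of_real (a * mode_energy \<phi> n + g * hilbert_cross \<phi> n)"
  shows "cmod (mode_pair \<psi> \<phi> n) \<le> cmod \<sigma> * ((\<bar>a\<bar> + \<bar>g\<bar>) * mode_energy \<phi> n)"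
    and "a + \<bar>g\<bar> \<le> 0 \<Longrightarrow> 0 \<le> Re (z * \<sigma>) \<Longrightarrow>
      - (a + \<bar>g\<bar>) * mode_energy \<phi> n * Re (z * \<sigma>) \<le> - Re (z * mode_pair \<psi> \<phi> n)"
proof -
  define q where "q = a * mode_energy \<phi> n + g * hilbert_cross \<phi> n"
  show "cmod (mode_pair \<psi> \<phi> n) \<le> cmod \<sigma> * ((\<bar>a\<bar> + \<bar>g\<bar>) * mode_energy \<phi> n)"
    unfolding mode norm_mult norm_of_real using hilbert_form_bounds(2)
    by (intro mult_left_mono) auto
  assume "0 \<le> Re (z * \<sigma>)"
  moreover have "- (a + \<bar>g\<bar>) * mode_energy \<phi> n \<le> - q"
    unfolding q_def using hilbert_form_bounds(1)[of a \<phi> n g] by linarith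
  ultimately have "- (a + \<bar>g\<bar>) * mode_energy \<phi> n * Re (z * \<sigma>) \<le> - q * Re (z * \<sigma>)"
    by (intro mult_right_mono)
  also have "\<dots> = - Re (z * mode_pair \<psi> \<phi> n)"
    unfolding mode q_def[symmetric] by (simp add: algebra_simps)
  finally show "- (a + \<bar>g\<bar>) * mode_energy \<phi> n * Re (z * \<sigma>) \<le> - Re (z * mode_pair \<psi> \<phi> n)" .
qed

lemma pairing_lower_bound:
  fixes \<sigma> :: "int \<Rightarrow> complex" and \<omega> \<omega>' :: "int \<Rightarrow> real" and z :: complex
  assumes modes: "\<And>n. mode_pair \<psi> \<phi> n = \<sigma> n * of_real (a * mode_energy \<phi> n + g * hilbert_cross \<phi> n)"
    and coercive: "a + \<bar>g\<bar> \<le> 0"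
    and sym_upper: "\<And>n. cmod (\<sigma> n) \<le> C * \<omega>' n"
    and sym_lower: "\<And>n. c * \<omega> n \<le> Re (z * \<sigma> n)"
    and summable': "(\<lambda>n. \<omega>' n * mode_energy \<phi> n) summable_on UNIV"
    and summable: "(\<lambda>n. \<omega> n * mode_energy \<phi> n) summable_on UNIV"
    and c: "0 \<le> c" and \<omega>: "\<And>n. 0 \<le> \<omega> n"
  shows "2 * pi * (- (a + \<bar>g\<bar>)) * c * (\<Sum>\<^sub>\<infinity>n. \<omega> n * mode_energy \<phi> n)
    \<le> - Re (z * pairing \<psi> (vconj \<phi>))"
proof -
  have "norm (mode_pair \<psi> \<phi> n) \<le> (C * (\<bar>a\<bar> + \<bar>g\<bar>)) * (\<omega>' n * mode_energy \<phi> n)" for n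
    using mode_pair_bounds(1)[OF modes, of n] sym_upper[of n] mode_energy_nonneg[of \<phi> n]
      mult_right_mono[OF sym_upper[of n], of "(\<bar>a\<bar> + \<bar>g\<bar>) * mode_energy \<phi> n"]
    by (simp add: algebra_simps)
  then have "(\<lambda>n. norm (mode_pair \<psi> \<phi> n)) summable_on UNIV"
    by (rule Infinite_Sum.abs_summable_on_comparison_test'[OF summable_on_cmult_right[OF summable']])
  then have pairs: "(\<lambda>n. - z * mode_pair \<psi> \<phi> n) summable_on UNIV"
    using summable_on_cmult_right[OF Infinite_Sum.abs_summable_summable] by blast
  have "(- (a + \<bar>g\<bar>) * c) * (\<omega> n * mode_energy \<phi> n) \<le> Re (- z * mode_pair \<psi> \<phi> n)" for n
  proof -
    have "0 \<le> - (a + \<bar>g\<bar>) * mode_energy \<phi> n"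
      using coercive mode_energy_nonneg[of \<phi> n] by simp
    then have "- (a + \<bar>g\<bar>) * mode_energy \<phi> n * (c * \<omega> n)
        \<le> - (a + \<bar>g\<bar>) * mode_energy \<phi> n * Re (z * \<sigma> n)"
      by (rule mult_left_mono[OF sym_lower])
    also have "\<dots> \<le> - Re (z * mode_pair \<psi> \<phi> n)"
      using mode_pair_bounds(2)[OF modes coercive] sym_lower[of n] c \<omega>[of n]
      by (meson mult_nonneg_nonneg order_trans)
    finally show ?thesis by (simp add: algebra_simps)
  qed
  then have "(\<Sum>\<^sub>\<infinity>n. (- (a + \<bar>g\<bar>) * c) * (\<omega> n * mode_energy \<phi> n))
      \<le> (\<Sum>\<^sub>\<infinity>n. Re (- z * mode_pair \<psi> \<phi> n))"
    by (rule infsum_mono[OF summable_on_cmult_right[OF summable] summable_on_Re[OF pairs]])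
  also have "\<dots> = Re (- z * (\<Sum>\<^sub>\<infinity>n. mode_pair \<psi> \<phi> n))"
    unfolding infsum_Re[OF pairs] infsum_cmult_right' ..
  finally have "2 * pi * ((- (a + \<bar>g\<bar>) * c) * (\<Sum>\<^sub>\<infinity>n. \<omega> n * mode_energy \<phi> n))
      \<le> 2 * pi * Re (- z * (\<Sum>\<^sub>\<infinity>n. mode_pair \<psi> \<phi> n))"
    unfolding infsum_cmult_right' by (rule mult_left_mono) simp
  then show ?thesis
    unfolding pairing_vconj by (simp add: algebra_simps)
qed

section \<open>The symbol of \<open>\<Lambda>\<^sub>\<kappa>\<close>\<close>

lemma sqrt_shifted_norm_bound:
  fixes w k :: complex and N m :: real
  assumes sq: "w\<^sup>2 = of_real N - k" and N: "0 \<le> N" and m: "m\<^sup>2 = max 1 N"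
  shows "(cmod w)\<^sup>2 \<le> (2 * cmod k + 1) * m\<^sup>2"
proof -
  have "(cmod w)\<^sup>2 = cmod (of_real N - k)"
    by (simp flip: sq add: norm_power)
  also have "\<dots> \<le> N + cmod k"
    using norm_triangle_ineq4[of "of_real N" k] N by simp
  also have "\<dots> \<le> (2 * cmod k + 1) * m\<^sup>2"
  proof -
    have "1 \<le> m\<^sup>2" "N \<le> m\<^sup>2" using m by auto
    then have "cmod k \<le> cmod k * m\<^sup>2"
      using mult_left_mono[of 1 "m\<^sup>2" "cmod k"] by simp
    with \<open>N \<le> m\<^sup>2\<close> show ?thesis
      unfolding ring_distribs using norm_ge_zero[of k] by linarith
  qed
  finally show ?thesis .
qed

lemma sqrt_shifted_Re_lower_bound:
  fixes w k :: complex and N m :: real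
  assumes sq: "w\<^sup>2 = of_real N - k" and im: "0 < Im k" and N: "0 \<le> N" and m: "m\<^sup>2 = max 1 N"
  shows "min (1/2) ((Im k)\<^sup>2 / (4 * (2 * cmod k + 1) ^ 3)) * m\<^sup>2 \<le> (Re w)\<^sup>2"
    (is "?a * _ \<le> _")
proof -
  define D where "D = 2 * cmod k + 1"
  have D: "1 \<le> D" unfolding D_def by simp
  \<comment> \<open>For large N, (Re w)^2 is at least N - Re k; for bounded N use |Re w Im w| = Im k / 2\<close>
  have re_sq: "(Re w)\<^sup>2 - (Im w)\<^sup>2 = N - Re k" and im_sq: "2 * Re w * Im w = - Im k"
    using arg_cong[OF sq, of Re] arg_cong[OF sq, of Im] by (simp_all add: power2_eq_square mult_ac)
  have norm_sq: "(Re w)\<^sup>2 + (Im w)\<^sup>2 \<le> D * m\<^sup>2"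
    using sqrt_shifted_norm_bound[OF sq N m] unfolding D_def cmod_power2 .
  show ?thesis
  proof (cases "D \<le> N")
    case True
    then have "m\<^sup>2 = N" using m D by simp
    moreover have "N / 2 \<le> (Re w)\<^sup>2"
      using re_sq True complex_Re_le_cmod[of k] zero_le_power2[of "Im w"] unfolding D_def by linarith
    moreover have "?a * N \<le> N / 2"
      using mult_right_mono[OF min.cobounded1[of "1/2"] N] by simp
    ultimately show ?thesis by simp
  next
    case False
    then have m_le: "m\<^sup>2 \<le> D" using m D by simp
    have "D * m\<^sup>2 \<le> D * D"
      using m_le D by (intro mult_left_mono) auto
    then have "(Im w)\<^sup>2 \<le> D\<^sup>2"
      using norm_sq zero_le_power2[of "Re w"] unfolding power2_eq_square[of D] by linarith
    moreover have y_pos: "(Im w)\<^sup>2 > 0" using im_sq im by auto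
    ultimately have "(Im k)\<^sup>2 / (4 * D\<^sup>2) \<le> (Im k)\<^sup>2 / (4 * (Im w)\<^sup>2)"
      using D by (intro divide_left_mono) auto
    also have "\<dots> = (Re w)\<^sup>2"
      using arg_cong[OF im_sq, of "\<lambda>t. t\<^sup>2"] y_pos by (simp add: field_simps power_mult_distrib)
    finally have "(Im k)\<^sup>2 / (4 * D\<^sup>2) \<le> (Re w)\<^sup>2" .
    moreover have "(Im k)\<^sup>2 / (4 * D ^ 3) * m\<^sup>2 \<le> (Im k)\<^sup>2 / (4 * D ^ 3) * D"
      using m_le D by (intro mult_left_mono) auto
    moreover have "(Im k)\<^sup>2 / (4 * D ^ 3) * D = (Im k)\<^sup>2 / (4 * D\<^sup>2)"
      using D by (simp add: power2_eq_square power3_eq_cube)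
    moreover have "?a * m\<^sup>2 \<le> (Im k)\<^sup>2 / (4 * D ^ 3) * m\<^sup>2"
      unfolding D_def by (intro mult_right_mono) auto
    ultimately show ?thesis by linarith
  qed
qed

lemma sqrt_shifted_bounds:
  fixes w k :: complex and N m :: real
  assumes sq: "w\<^sup>2 = of_real N - k" and re: "0 \<le> Re w" and im: "0 < Im k" and N: "0 \<le> N"
    and m: "m\<^sup>2 = max 1 N" "1 \<le> m"
  defines "D \<equiv> 2 * cmod k + 1"
  shows "cmod w \<le> sqrt D * m"
    and "sqrt (min (1/2) ((Im k)\<^sup>2 / (4 * D ^ 3))) * m \<le> Re w"
    and "Im k / (2 * sqrt D) / m \<le> - Im w"
proof -
  show norm: "cmod w \<le> sqrt D * m"
    using real_sqrt_le_mono[OF sqrt_shifted_norm_bound[OF sq N m(1), folded D_def]] m(2)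
    by (simp add: real_sqrt_mult)
  show re_lower: "sqrt (min (1/2) ((Im k)\<^sup>2 / (4 * D ^ 3))) * m \<le> Re w"
    using real_sqrt_le_mono[OF sqrt_shifted_Re_lower_bound[OF sq im N m(1), folded D_def]] re m(2)
    by (simp add: real_sqrt_mult)
  have D: "0 < D" unfolding D_def by (simp add: add_nonneg_pos)
  then have "0 < sqrt (min (1/2) ((Im k)\<^sup>2 / (4 * D ^ 3))) * m"
    using im m(2) by simp
  with re_lower have re_pos: "0 < Re w" by linarith
  have "2 * Re w * Im w = - Im k"
    using arg_cong[OF sq, of Im] by (simp add: power2_eq_square mult_ac)
  then have "- Im w = Im k / (2 * Re w)"
    using re_pos by (simp add: field_simps)
  moreover have "Re w \<le> sqrt D * m"
    using complex_Re_le_cmod[of w] norm by linarith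
  then have "Im k / (2 * (sqrt D * m)) \<le> Im k / (2 * Re w)"
    using re_pos im m(2) D by (intro divide_left_mono) auto
  ultimately show "Im k / (2 * sqrt D) / m \<le> - Im w"
    by (simp add: mult.commute)
qed

lemma csqrt_shifted_square_bounds:
  fixes k :: complex
  assumes k: "0 < Im k"
  obtains c where "0 < c" and "c \<le> 1"
    and "\<And>n. c * freq_weight n \<le> Re (csqrt (of_int n ^ 2 - k))"
    and "\<And>n. c / freq_weight n \<le> - Im (csqrt (of_int n ^ 2 - k))"
    and "\<And>n. cmod (csqrt (of_int n ^ 2 - k)) \<le> freq_weight n / c"
proof -
  define D where "D = 2 * cmod k + 1"
  define a where "a = min (1/2) ((Im k)\<^sup>2 / (4 * D ^ 3))"
  define c where "c = min (sqrt a) (min (Im k / (2 * sqrt D)) (1 / sqrt D))"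
  have D: "1 \<le> D" unfolding D_def by simp
  have c: "0 < c" "c \<le> sqrt a" "c \<le> Im k / (2 * sqrt D)" "c \<le> 1 / sqrt D"
    unfolding c_def a_def using k D by auto
  have "1 / sqrt D \<le> 1" using D by simp
  with c(4) have "c \<le> 1" by linarith
  moreover have "c * freq_weight n \<le> Re (csqrt (of_int n ^ 2 - k)) \<and>
      c / freq_weight n \<le> - Im (csqrt (of_int n ^ 2 - k)) \<and>
      cmod (csqrt (of_int n ^ 2 - k)) \<le> freq_weight n / c" for n
  proof -
    define w where "w = csqrt (of_int n ^ 2 - k)"
    define m where "m = freq_weight n"
    have sq: "w\<^sup>2 = of_real ((real_of_int n)\<^sup>2) - k"
      unfolding w_def by simp
    have m: "m\<^sup>2 = max 1 ((real_of_int n)\<^sup>2)" "1 \<le> m"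
      unfolding m_def by (rule freq_weight_sq, rule freq_weight_ge_1)
    have re: "0 \<le> Re w" unfolding w_def by (rule Re_csqrt)
    note bounds = sqrt_shifted_bounds[OF sq re k zero_le_power2 m, folded D_def, folded a_def]
    have "c * m \<le> Re w"
      using bounds(2) mult_right_mono[OF c(2), of m] m(2) by linarith
    moreover have "c / m \<le> - Im w"
      using bounds(3) divide_right_mono[OF c(3), of m] m(2) by linarith
    moreover have "sqrt D * m \<le> m / c"
      using c(1,4) D m(2) mult_right_mono[of "sqrt D" "1 / c" m] by (simp add: field_simps)
    ultimately show ?thesis
      using bounds(1) unfolding w_def m_def by linarith
  qed
  ultimately show ?thesis using that c(1) by blast
qed

lemma inverse_fourth_quadrant_bounds:
  fixes w :: complex and c m :: real
  assumes c: "0 < c" and m: "0 < m"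
    and re: "c * m \<le> Re w" and im: "c / m \<le> - Im w" and norm: "cmod w \<le> m / c"
  shows "c ^ 3 / m \<le> Re (inverse w)"
    and "c ^ 3 / m ^ 3 \<le> Im (inverse w)"
    and "cmod (inverse w) \<le> 1 / (c * m)"
proof -
  have "0 < c * m" using c m by simp
  with re have re_pos: "0 < Re w" by linarith
  have norm_pos: "0 < (cmod w)\<^sup>2" using re_pos by (auto simp: complex_eq_iff)
  have im_nonneg: "0 \<le> - Im w" using im divide_pos_pos[OF c m] by linarith
  have norm_sq: "(cmod w)\<^sup>2 \<le> (m / c)\<^sup>2" using norm by (intro power_mono) auto
  have "c ^ 3 / m = (c * m) / (m / c)\<^sup>2" using c m by (simp add: field_simps power2_eq_square power3_eq_cube)
  also have "\<dots> \<le> Re w / (cmod w)\<^sup>2"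
    using re re_pos norm_sq norm_pos c m by (intro frac_le) auto
  finally show "c ^ 3 / m \<le> Re (inverse w)" by (simp add: cmod_power2)
  have "c ^ 3 / m ^ 3 = (c / m) / (m / c)\<^sup>2" using c m by (simp add: field_simps power2_eq_square power3_eq_cube)
  also have "\<dots> \<le> - Im w / (cmod w)\<^sup>2"
    using im im_nonneg norm_sq norm_pos c m by (intro frac_le) auto
  finally show "c ^ 3 / m ^ 3 \<le> Im (inverse w)" by (simp add: cmod_power2)
  have "cmod (inverse w) = 1 / cmod w" by (simp add: norm_inverse divide_inverse)
  also have "\<dots> \<le> 1 / (c * m)"
    using re re_pos complex_Re_le_cmod[of w] c m by (intro divide_left_mono) (auto intro!: mult_pos_pos)
  finally show "cmod (inverse w) \<le> 1 / (c * m)" .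
qed

lemma inverse_lam_sym: "inverse (lam_sym \<kappa> n) = csqrt (of_int n ^ 2 - \<kappa>\<^sup>2)"
proof -
  have "(-1/2::complex) = - (1/2)" by simp
  then show ?thesis unfolding lam_sym_def csqrt_conv_powr by (simp only: powr_minus inverse_inverse_eq)
qed

lemma inverse_lam_sym_bounds:
  assumes "0 < Re \<kappa>" and "0 < Im \<kappa>"
  obtains c where "0 < c" and "c \<le> 1"
    and "\<And>n. c * freq_weight n \<le> Re (inverse (lam_sym \<kappa> n))"
    and "\<And>n. c / freq_weight n \<le> - Im (inverse (lam_sym \<kappa> n))"
    and "\<And>n. cmod (inverse (lam_sym \<kappa> n)) \<le> freq_weight n / c"
proof -
  have "0 < Im (\<kappa>\<^sup>2)" using assms by (simp add: power2_eq_square)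
  then obtain c where "0 < c" and "c \<le> 1"
    and "\<And>n. c * freq_weight n \<le> Re (csqrt (of_int n ^ 2 - \<kappa>\<^sup>2))"
    and "\<And>n. c / freq_weight n \<le> - Im (csqrt (of_int n ^ 2 - \<kappa>\<^sup>2))"
    and "\<And>n. cmod (csqrt (of_int n ^ 2 - \<kappa>\<^sup>2)) \<le> freq_weight n / c"
    by (rule csqrt_shifted_square_bounds) blast
  then show ?thesis
    unfolding inverse_lam_sym[symmetric] by (rule that)
qed

lemma lam_sym_bounds:
  assumes "0 < Re \<kappa>" and "0 < Im \<kappa>"
  obtains c where "0 < c"
    and "\<And>n. c / freq_weight n \<le> Re (lam_sym \<kappa> n)"
    and "\<And>n. c / freq_weight n ^ 3 \<le> Im (lam_sym \<kappa> n)"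
    and "\<And>n. cmod (lam_sym \<kappa> n) \<le> 1 / c * (1 / freq_weight n)"
proof -
  obtain c where c: "0 < c" "c \<le> 1"
    and re: "\<And>n. c * freq_weight n \<le> Re (inverse (lam_sym \<kappa> n))"
    and im: "\<And>n. c / freq_weight n \<le> - Im (inverse (lam_sym \<kappa> n))"
    and norm: "\<And>n. cmod (inverse (lam_sym \<kappa> n)) \<le> freq_weight n / c"
    by (rule inverse_lam_sym_bounds[OF assms]) blast
  have c3: "0 < c ^ 3" "c ^ 3 \<le> c" using c by (auto simp: power_le_one power3_eq_cube mult_le_one)
  show ?thesis
  proof (rule that[OF c3(1)])
    fix n
    have m: "1 \<le> freq_weight n" by (rule freq_weight_ge_1)
    then have "0 < freq_weight n" by linarith
    note inv = inverse_fourth_quadrant_bounds[OF c(1) this re im norm, simplified]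
    show "c ^ 3 / freq_weight n \<le> Re (lam_sym \<kappa> n)"
      using inv(1) m by simp
    show "c ^ 3 / freq_weight n ^ 3 \<le> Im (lam_sym \<kappa> n)"
      using inv(2) m by simp
    have "cmod (lam_sym \<kappa> n) \<le> 1 / (c * freq_weight n)"
      using inv(3) by simp
    also have "\<dots> \<le> 1 / (c ^ 3 * freq_weight n)"
      using c3 m by (intro divide_left_mono mult_right_mono mult_pos_pos) auto
    finally show "cmod (lam_sym \<kappa> n) \<le> 1 / c ^ 3 * (1 / freq_weight n)"
      by simp
  qed
qed

section \<open>The operators \<open>R\<^sub>1\<^sub>2\<close> and \<open>R\<^sub>2\<^sub>1\<close>\<close>

lemmas R_defs = R12_def R21_def Rop_def Let_def badd_def bsmul_def Cop_def vadd_def vsmul_def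
      vH_def vLam_def vLamInv_def Lam_def LamInv_def Hs_def vzero_def

lemma R12_eq:
  "R12 \<mu>p lp \<mu>m lm \<kappa> \<phi> = vLam \<kappa> (vsmul (inverse (rho \<mu>p lp \<mu>m lm)) (vadd
     (vsmul (- (beta \<mu>p lp + beta \<mu>m lm) / 2) \<phi>)
     (vsmul (beta \<mu>p lp * alpha \<mu>m lm - alpha \<mu>p lp * beta \<mu>m lm) (vH \<phi>))))"
  (is "?l = ?r")
proof -
  have "fst ?l n = fst ?r n \<and> snd ?l n = snd ?r n" for n
    by (cases "0 \<le> n") (simp_all add: R_defs algebra_simps add_divide_distrib diff_divide_distrib)
  then show ?thesis by (simp add: prod_eq_iff fun_eq_iff)
qed

lemma R21_eq:
  "R21 \<mu>p lp \<mu>m lm \<kappa> g = vLamInv \<kappa> (vsmul (inverse (rho \<mu>p lp \<mu>m lm)) (vadd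
     (vsmul ((delta \<mu>p lp + delta \<mu>m lm) / 2) g)
     (vsmul (delta \<mu>p lp * alpha \<mu>m lm - alpha \<mu>p lp * delta \<mu>m lm) (vH g))))"
  (is "?l = ?r")
proof -
  have "fst ?l n = fst ?r n \<and> snd ?l n = snd ?r n" for n
    by (cases "0 \<le> n") (simp_all add: R_defs algebra_simps add_divide_distrib diff_divide_distrib)
  then show ?thesis by (simp add: prod_eq_iff fun_eq_iff)
qed

lemma lame_coefficients:
  assumes "0 < \<mu>" and "- \<mu> < la"
  shows "alpha \<mu> la = \<i> * of_real (Im (alpha \<mu> la))" and "0 < Im (alpha \<mu> la)"
    and "Im (alpha \<mu> la) < 1/2"
    and "beta \<mu> la = of_real (Re (beta \<mu> la))" and "0 < Re (beta \<mu> la)"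
    and "delta \<mu> la = of_real (Re (delta \<mu> la))" and "Re (delta \<mu> la) < 0"
proof -
  have pos: "0 < la + 2 * \<mu>" "0 < la + 3 * \<mu>" "0 < la + \<mu>" using assms by linarith+
  show "alpha \<mu> la = \<i> * of_real (Im (alpha \<mu> la))"
    by (simp add: alpha_def complex_eq_iff)
  show "0 < Im (alpha \<mu> la)" "Im (alpha \<mu> la) < 1/2"
    using assms pos by (simp_all add: alpha_def field_simps)
  show "beta \<mu> la = of_real (Re (beta \<mu> la))" "0 < Re (beta \<mu> la)"
    using assms pos by (simp_all add: beta_def)
  show "delta \<mu> la = of_real (Re (delta \<mu> la))" "Re (delta \<mu> la) < 0"
    using assms pos by (simp_all add: delta_def divide_neg_pos)
qed

lemma rho_real_pos:
  assumes "0 < \<mu>p" and "0 < \<mu>m" and "- \<mu>p < lp" and "- \<mu>m < lm"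
  shows "rho \<mu>p lp \<mu>m lm = of_real (Re (rho \<mu>p lp \<mu>m lm))" and "0 < Re (rho \<mu>p lp \<mu>m lm)"
proof -
  define ap am bp bm dp dm where "ap = Im (alpha \<mu>p lp)" and "am = Im (alpha \<mu>m lm)"
    and "bp = Re (beta \<mu>p lp)" and "bm = Re (beta \<mu>m lm)"
    and "dp = Re (delta \<mu>p lp)" and "dm = Re (delta \<mu>m lm)"
  note p = lame_coefficients[OF assms(1,3), folded ap_def bp_def dp_def]
  note m = lame_coefficients[OF assms(2,4), folded am_def bm_def dm_def]
  have rho: "rho \<mu>p lp \<mu>m lm = of_real ((ap + am)\<^sup>2 - (bp + bm) * (dp + dm))"
    unfolding rho_def p(1,4,6) m(1,4,6) by (simp add: complex_eq_iff power2_eq_square algebra_simps)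
  then show "rho \<mu>p lp \<mu>m lm = of_real (Re (rho \<mu>p lp \<mu>m lm))" by simp
  show "0 < Re (rho \<mu>p lp \<mu>m lm)"
    unfolding rho Re_complex_of_real
    using p m mult_pos_neg[of "bp + bm" "dp + dm"] zero_le_power2[of "ap + am"] by linarith
qed

lemma R12_modes:
  assumes "0 < \<mu>p" and "0 < \<mu>m" and "- \<mu>p < lp" and "- \<mu>m < lm"
  obtains a g :: real where "a + \<bar>g\<bar> < 0"
    and "\<And>\<phi> n. mode_pair (R12 \<mu>p lp \<mu>m lm \<kappa> \<phi>) \<phi> n
      = lam_sym \<kappa> n * of_real (a * mode_energy \<phi> n + g * hilbert_cross \<phi> n)"
proof -
  define ap am bp bm r where "ap = Im (alpha \<mu>p lp)" and "am = Im (alpha \<mu>m lm)"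
    and "bp = Re (beta \<mu>p lp)" and "bm = Re (beta \<mu>m lm)" and "r = Re (rho \<mu>p lp \<mu>m lm)"
  note p = lame_coefficients[OF assms(1,3), folded ap_def bp_def]
  note m = lame_coefficients[OF assms(2,4), folded am_def bm_def]
  note rho = rho_real_pos[OF assms, folded r_def]
  define x where "x = bp * am - ap * bm"
  have "\<bar>x\<bar> \<le> bp * am + ap * bm"
    using p m unfolding x_def by (simp add: abs_le_iff)
  also have "\<dots> < bp * (1/2) + (1/2) * bm"
    using p m by (intro add_strict_mono mult_strict_left_mono mult_strict_right_mono) auto
  finally have "\<bar>x\<bar> - (bp + bm) / 2 < 0" by simp
  moreover have "- (bp + bm) / (2 * r) + \<bar>- x / r\<bar> = (\<bar>x\<bar> - (bp + bm) / 2) / r"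
    using rho(2) by (simp add: field_simps)
  ultimately have "- (bp + bm) / (2 * r) + \<bar>- x / r\<bar> < 0"
    using rho(2) by (simp add: divide_neg_pos)
  moreover have "mode_pair (R12 \<mu>p lp \<mu>m lm \<kappa> \<phi>) \<phi> n = lam_sym \<kappa> n *
      of_real (- (bp + bm) / (2 * r) * mode_energy \<phi> n + - x / r * hilbert_cross \<phi> n)" for \<phi> n
    unfolding R12_eq mode_pair_vLam mode_pair_vsmul mode_pair_vadd mode_pair_self mode_pair_vH
      rho(1) p(1,4) m(1,4) x_def
    using rho(2) by (intro arg_cong[where f = "(*) _"]) (simp add: complex_eq_iff field_simps)
  ultimately show ?thesis by (rule that)
qed

lemma R21_modes:
  assumes "0 < \<mu>p" and "0 < \<mu>m" and "- \<mu>p < lp" and "- \<mu>m < lm"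
  obtains a g :: real where "a + \<bar>g\<bar> < 0"
    and "\<And>\<phi> n. mode_pair (R21 \<mu>p lp \<mu>m lm \<kappa> \<phi>) \<phi> n
      = inverse (lam_sym \<kappa> n) * of_real (a * mode_energy \<phi> n + g * hilbert_cross \<phi> n)"
proof -
  define ap am dp dm r where "ap = Im (alpha \<mu>p lp)" and "am = Im (alpha \<mu>m lm)"
    and "dp = Re (delta \<mu>p lp)" and "dm = Re (delta \<mu>m lm)" and "r = Re (rho \<mu>p lp \<mu>m lm)"
  note p = lame_coefficients[OF assms(1,3), folded ap_def dp_def]
  note m = lame_coefficients[OF assms(2,4), folded am_def dm_def]
  note rho = rho_real_pos[OF assms, folded r_def]
  define x where "x = dp * am - ap * dm"
  have "\<bar>x\<bar> \<le> (- dp) * am + ap * (- dm)"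
    using p m mult_pos_neg[of am dp] mult_pos_neg[of ap dm] unfolding x_def by (simp add: abs_le_iff mult.commute)
  also have "\<dots> < (- dp) * (1/2) + (1/2) * (- dm)"
    using p m by (intro add_strict_mono mult_strict_left_mono mult_strict_right_mono) auto
  finally have "\<bar>x\<bar> + (dp + dm) / 2 < 0" by (simp add: add_divide_distrib)
  moreover have "(dp + dm) / (2 * r) + \<bar>- x / r\<bar> = (\<bar>x\<bar> + (dp + dm) / 2) / r"
    using rho(2) by (simp add: field_simps)
  ultimately have "(dp + dm) / (2 * r) + \<bar>- x / r\<bar> < 0"
    using rho(2) by (simp add: divide_neg_pos)
  moreover have "mode_pair (R21 \<mu>p lp \<mu>m lm \<kappa> \<phi>) \<phi> n = inverse (lam_sym \<kappa> n) *
      of_real ((dp + dm) / (2 * r) * mode_energy \<phi> n + - x / r * hilbert_cross \<phi> n)" for \<phi> n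
    unfolding R21_eq mode_pair_vLamInv mode_pair_vsmul mode_pair_vadd mode_pair_self mode_pair_vH
      rho(1) p(1,6) m(1,6) x_def
    using rho(2) by (intro arg_cong[where f = "(*) _"]) (simp add: complex_eq_iff field_simps)
  ultimately show ?thesis by (rule that)
qed

lemma R12_coercive:
  assumes "0 < \<mu>p" and "0 < \<mu>m" and "- \<mu>p < lp" and "- \<mu>m < lm"
    and "0 < Re \<kappa>" and "0 < Im \<kappa>"
  obtains c where "0 < c"
    and "\<And>\<phi>. inHv (-1/2) \<phi> \<Longrightarrow>
      c * sob_vnorm2 (-1/2) \<phi> \<le> - Re (pairing (R12 \<mu>p lp \<mu>m lm \<kappa> \<phi>) (vconj \<phi>))"
    and "\<And>\<phi>. inHv (-1/2) \<phi> \<Longrightarrow>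
      c * sob_vnorm2 (-3/2) \<phi> \<le> - Im (pairing (R12 \<mu>p lp \<mu>m lm \<kappa> \<phi>) (vconj \<phi>))"
proof -
  obtain a g where ag: "a + \<bar>g\<bar> < 0" and modes: "\<And>\<phi> n. mode_pair (R12 \<mu>p lp \<mu>m lm \<kappa> \<phi>) \<phi> n
      = lam_sym \<kappa> n * of_real (a * mode_energy \<phi> n + g * hilbert_cross \<phi> n)"
    by (rule R12_modes[OF assms(1-4)]) blast
  obtain c where c: "0 < c"
    and re: "\<And>n. c / freq_weight n \<le> Re (lam_sym \<kappa> n)"
    and im: "\<And>n. c / freq_weight n ^ 3 \<le> Im (lam_sym \<kappa> n)"
    and norm: "\<And>n. cmod (lam_sym \<kappa> n) \<le> 1 / c * (1 / freq_weight n)"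
    by (rule lam_sym_bounds[OF assms(5,6)]) blast
  have re': "c * (1 / freq_weight n) \<le> Re (1 * lam_sym \<kappa> n)" for n
    using re[of n] by simp
  have im': "c * (1 / freq_weight n ^ 3) \<le> Re (- \<i> * lam_sym \<kappa> n)" for n
    using im[of n] by simp
  have nonneg: "0 \<le> 1 / freq_weight n" "0 \<le> 1 / freq_weight n ^ 3" for n
    using freq_weight_ge_1[of n] by simp_all
  show ?thesis
  proof (rule that[of "2 * pi * (- (a + \<bar>g\<bar>)) * c"])
    show "0 < 2 * pi * (- (a + \<bar>g\<bar>)) * c" using ag c by simp
  next
    fix \<phi> assume \<phi>: "inHv (-1/2) \<phi>"
    note norm1 = sob_vnorm2_eq[OF \<phi>, unfolded freq_weight_powr]
    have "inHv (-3/2) \<phi>" using inHv_mono[OF _ \<phi>, of "-3/2"] by simp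
    note norm3 = sob_vnorm2_eq[OF this, unfolded freq_weight_powr]
    show "2 * pi * (- (a + \<bar>g\<bar>)) * c * sob_vnorm2 (-1/2) \<phi>
        \<le> - Re (pairing (R12 \<mu>p lp \<mu>m lm \<kappa> \<phi>) (vconj \<phi>))"
      using pairing_lower_bound[OF modes _ norm re' norm1(1) norm1(1)] ag c nonneg
      unfolding norm1(2) by simp
    show "2 * pi * (- (a + \<bar>g\<bar>)) * c * sob_vnorm2 (-3/2) \<phi>
        \<le> - Im (pairing (R12 \<mu>p lp \<mu>m lm \<kappa> \<phi>) (vconj \<phi>))"
      using pairing_lower_bound[OF modes _ norm im' norm1(1) norm3(1)] ag c nonneg
      unfolding norm3(2) by simp
  qed
qed

lemma R21_coercive:
  assumes "0 < \<mu>p" and "0 < \<mu>m" and "- \<mu>p < lp" and "- \<mu>m < lm"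
    and "0 < Re \<kappa>" and "0 < Im \<kappa>"
  obtains c where "0 < c"
    and "\<And>g. inHv (1/2) g \<Longrightarrow>
      c * sob_vnorm2 (1/2) g \<le> - Re (pairing (R21 \<mu>p lp \<mu>m lm \<kappa> g) (vconj g))"
    and "\<And>g. inHv (1/2) g \<Longrightarrow>
      c * sob_vnorm2 (-1/2) g \<le> Im (pairing (R21 \<mu>p lp \<mu>m lm \<kappa> g) (vconj g))"
proof -
  obtain a g where ag: "a + \<bar>g\<bar> < 0" and modes: "\<And>\<phi> n. mode_pair (R21 \<mu>p lp \<mu>m lm \<kappa> \<phi>) \<phi> n
      = inverse (lam_sym \<kappa> n) * of_real (a * mode_energy \<phi> n + g * hilbert_cross \<phi> n)"
    by (rule R21_modes[OF assms(1-4)]) blast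
  obtain c where c: "0 < c" "c \<le> 1"
    and re: "\<And>n. c * freq_weight n \<le> Re (inverse (lam_sym \<kappa> n))"
    and im: "\<And>n. c / freq_weight n \<le> - Im (inverse (lam_sym \<kappa> n))"
    and norm: "\<And>n. cmod (inverse (lam_sym \<kappa> n)) \<le> freq_weight n / c"
    by (rule inverse_lam_sym_bounds[OF assms(5,6)]) blast
  have re': "c * freq_weight n \<le> Re (1 * inverse (lam_sym \<kappa> n))" for n
    using re[of n] by simp
  have im': "c * (1 / freq_weight n) \<le> Re (\<i> * inverse (lam_sym \<kappa> n))" for n
    using im[of n] by simp
  have norm': "cmod (inverse (lam_sym \<kappa> n)) \<le> 1 / c * freq_weight n" for n
    using norm[of n] by simp
  have nonneg: "0 \<le> freq_weight n" "0 \<le> 1 / freq_weight n" for n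
    using freq_weight_ge_1[of n] by simp_all
  show ?thesis
  proof (rule that[of "2 * pi * (- (a + \<bar>g\<bar>)) * c"])
    show "0 < 2 * pi * (- (a + \<bar>g\<bar>)) * c" using ag c by simp
  next
    fix \<phi> assume \<phi>: "inHv (1/2) \<phi>"
    note norm1 = sob_vnorm2_eq[OF \<phi>, unfolded freq_weight_powr]
    have "inHv (-1/2) \<phi>" using inHv_mono[OF _ \<phi>, of "-1/2"] by simp
    note norm_m1 = sob_vnorm2_eq[OF this, unfolded freq_weight_powr]
    show "2 * pi * (- (a + \<bar>g\<bar>)) * c * sob_vnorm2 (1/2) \<phi>
        \<le> - Re (pairing (R21 \<mu>p lp \<mu>m lm \<kappa> \<phi>) (vconj \<phi>))"
      using pairing_lower_bound[OF modes _ norm' re' norm1(1) norm1(1)] ag c nonneg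
      unfolding norm1(2) by simp
    show "2 * pi * (- (a + \<bar>g\<bar>)) * c * sob_vnorm2 (-1/2) \<phi>
        \<le> Im (pairing (R21 \<mu>p lp \<mu>m lm \<kappa> \<phi>) (vconj \<phi>))"
      using pairing_lower_bound[OF modes _ norm' im' norm1(1) norm_m1(1)] ag c nonneg
      unfolding norm_m1(2) by simp
  qed
qed

theorem mainTheorem11:
  fixes \<mu>p lp \<mu>m lm :: real and \<kappa> :: complex
  assumes "\<mu>p > 0" and "\<mu>m > 0" and "lp > - \<mu>p" and "lm > - \<mu>m"
    and "Re \<kappa> > 0" and "Im \<kappa> > 0"
  shows "\<exists>c1 > 0.
    (\<forall>\<phi>. inHv (-1/2) \<phi> \<longrightarrow>
       - Re (pairing (R12 \<mu>p lp \<mu>m lm \<kappa> \<phi>) (vconj \<phi>)) \<ge> c1 * sob_vnorm2 (-1/2) \<phi> \<and>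
       - Im (pairing (R12 \<mu>p lp \<mu>m lm \<kappa> \<phi>) (vconj \<phi>)) \<ge> c1 * sob_vnorm2 (-3/2) \<phi>) \<and>
    (\<forall>g. inHv (1/2) g \<longrightarrow>
       - Re (pairing (R21 \<mu>p lp \<mu>m lm \<kappa> g) (vconj g)) \<ge> c1 * sob_vnorm2 (1/2) g \<and>
       Im (pairing (R21 \<mu>p lp \<mu>m lm \<kappa> g) (vconj g)) \<ge> c1 * sob_vnorm2 (-1/2) g)"
proof -
  obtain c12 where c12: "0 < c12"
    and R12_re: "\<And>\<phi>. inHv (-1/2) \<phi> \<Longrightarrow>
      c12 * sob_vnorm2 (-1/2) \<phi> \<le> - Re (pairing (R12 \<mu>p lp \<mu>m lm \<kappa> \<phi>) (vconj \<phi>))"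
    and R12_im: "\<And>\<phi>. inHv (-1/2) \<phi> \<Longrightarrow>
      c12 * sob_vnorm2 (-3/2) \<phi> \<le> - Im (pairing (R12 \<mu>p lp \<mu>m lm \<kappa> \<phi>) (vconj \<phi>))"
    by (rule R12_coercive[OF assms]) blast
  obtain c21 where c21: "0 < c21"
    and R21_re: "\<And>g. inHv (1/2) g \<Longrightarrow>
      c21 * sob_vnorm2 (1/2) g \<le> - Re (pairing (R21 \<mu>p lp \<mu>m lm \<kappa> g) (vconj g))"
    and R21_im: "\<And>g. inHv (1/2) g \<Longrightarrow>
      c21 * sob_vnorm2 (-1/2) g \<le> Im (pairing (R21 \<mu>p lp \<mu>m lm \<kappa> g) (vconj g))"
    by (rule R21_coercive[OF assms]) blast
  show ?thesis
  proof (intro exI[of _ "min c12 c21"] conjI allI impI)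
    show "0 < min c12 c21" using c12 c21 by simp
  qed (blast intro: sob_vnorm2_scale_mono[OF min.cobounded1] sob_vnorm2_scale_mono[OF min.cobounded2]
      R12_re R12_im R21_re R21_im)+
qed

end
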